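(* Let $Q$ be a quiver and $C$ a monomial admissible subcoalgebra of $kQ$. If there is a path $p\in C$ of positive length such that $p\beta\notin C$ for every arrow $\beta$ of $Q$ (or such that $\beta p\notin C$ for every arrow $\beta$), then $C$ is not semiprime. In particular, if there is an arrow $\alpha$ such that no arrow $\beta$ satisfies $\beta\alpha\in C$ (or no arrow $\beta$ satisfies $\alpha\beta\in C$), then $C$ is not semiprime. *)

theory Defs
  imports Main
begin

text \<open>Quiver Q = (vertices 'v, arrows 'e, source map s, target map t).
  A path is a pair (start vertex, list of arrows); the empty list is the trivial path e_v.\<close>

fun chain :: "('e \<Rightarrow> 'v) \<Rightarrow> ('e \<Rightarrow> 'v) \<Rightarrow> 'v \<Rightarrow> 'e list \<Rightarrow> bool" where
  "chain s t v [] = True"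
| "chain s t v (a # as) = (s a = v \<and> chain s t (t a) as)"

fun endv :: "('e \<Rightarrow> 'v) \<Rightarrow> 'v \<Rightarrow> 'e list \<Rightarrow> 'v" where
  "endv t v [] = v"
| "endv t v (a # as) = endv t (t a) as"

definition is_path :: "('e \<Rightarrow> 'v) \<Rightarrow> ('e \<Rightarrow> 'v) \<Rightarrow> 'v \<times> 'e list \<Rightarrow> bool" where
  "is_path s t p = chain s t (fst p) (snd p)"

definition path_len :: "'v \<times> 'e list \<Rightarrow> nat" where
  "path_len p = length (snd p)"

definition arrow_path :: "('e \<Rightarrow> 'v) \<Rightarrow> 'e \<Rightarrow> 'v \<times> 'e list" where
  "arrow_path s a = (s a, [a])"

definition composable :: "('e \<Rightarrow> 'v) \<Rightarrow> 'v \<times> 'e list \<Rightarrow> 'v \<times> 'e list \<Rightarrow> bool" where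
  "composable t p q = (endv t (fst p) (snd p) = fst q)"

definition pconcat :: "'v \<times> 'e list \<Rightarrow> 'v \<times> 'e list \<Rightarrow> 'v \<times> 'e list" where
  "pconcat p q = (fst p, snd p @ snd q)"

text \<open>The path coalgebra kQ: finitely supported k-valued functions on paths
  (coordinates w.r.t. the basis of paths).\<close>
definition path_space :: "('e \<Rightarrow> 'v) \<Rightarrow> ('e \<Rightarrow> 'v) \<Rightarrow> ('v \<times> 'e list \<Rightarrow> 'k::field) set" where
  "path_space s t = {x. finite {p. x p \<noteq> 0} \<and> (\<forall>p. x p \<noteq> 0 \<longrightarrow> is_path s t p)}"

definition bvec :: "'v \<times> 'e list \<Rightarrow> 'v \<times> 'e list \<Rightarrow> 'k::field" where
  "bvec p = (\<lambda>q. if q = p then 1 else 0)"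

text \<open>Comultiplication Delta(p) = sum over p = q r of q (x) r, in coordinates of
  kQ (x) kQ (finitely supported functions on pairs of paths).\<close>
definition comult :: "('e \<Rightarrow> 'v) \<Rightarrow> ('e \<Rightarrow> 'v) \<Rightarrow> ('v \<times> 'e list \<Rightarrow> 'k::field)
    \<Rightarrow> ('v \<times> 'e list) \<times> ('v \<times> 'e list) \<Rightarrow> 'k" where
  "comult s t x = (\<lambda>(q, r). if is_path s t q \<and> is_path s t r \<and> composable t q r
                             then x (pconcat q r) else 0)"

definition tensor :: "('v \<times> 'e list \<Rightarrow> 'k::field) set \<Rightarrow> ('v \<times> 'e list \<Rightarrow> 'k) set
    \<Rightarrow> (('v \<times> 'e list) \<times> ('v \<times> 'e list) \<Rightarrow> 'k) set" where
  "tensor C D = {z. \<exists>(n::nat) xs ys. (\<forall>i<n. xs i \<in> C \<and> ys i \<in> D) \<and>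
                    z = (\<lambda>(q, r). \<Sum>i<n. xs i q * ys i r)}"

definition subcoalgebra :: "('e \<Rightarrow> 'v) \<Rightarrow> ('e \<Rightarrow> 'v) \<Rightarrow> ('v \<times> 'e list \<Rightarrow> 'k::field) set \<Rightarrow> bool" where
  "subcoalgebra s t C \<longleftrightarrow>
     C \<subseteq> path_space s t \<and> (\<lambda>_. 0) \<in> C \<and>
     (\<forall>x\<in>C. \<forall>y\<in>C. (\<lambda>p. x p + y p) \<in> C) \<and>
     (\<forall>a. \<forall>x\<in>C. (\<lambda>p. a * x p) \<in> C) \<and>
     (\<forall>x\<in>C. comult s t x \<in> tensor C C)"

definition paths_of :: "('e \<Rightarrow> 'v) \<Rightarrow> ('e \<Rightarrow> 'v) \<Rightarrow> ('v \<times> 'e list \<Rightarrow> 'k::field) set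
    \<Rightarrow> ('v \<times> 'e list) set" where
  "paths_of s t C = {p. is_path s t p \<and> bvec p \<in> C}"

definition monomial :: "('e \<Rightarrow> 'v) \<Rightarrow> ('e \<Rightarrow> 'v) \<Rightarrow> ('v \<times> 'e list \<Rightarrow> 'k::field) set \<Rightarrow> bool" where
  "monomial s t C \<longleftrightarrow>
     C = {x \<in> path_space s t. \<forall>p. x p \<noteq> 0 \<longrightarrow> p \<in> paths_of s t C}"

text \<open>Admissible: kQ_0 + kQ_1 is contained in C.\<close>
definition admissible :: "('e \<Rightarrow> 'v) \<Rightarrow> ('v \<times> 'e list \<Rightarrow> 'k::field) set \<Rightarrow> bool" where
  "admissible s C \<longleftrightarrow> (\<forall>v. bvec (v, []) \<in> C) \<and> (\<forall>a. bvec (arrow_path s a) \<in> C)"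

text \<open>Dual algebra C* of a monomial subcoalgebra C: since C has the basis paths_of C,
  a linear functional on C is the same as a function on paths_of C
  (we extend it by 0).\<close>
definition dual_carrier :: "('e \<Rightarrow> 'v) \<Rightarrow> ('e \<Rightarrow> 'v) \<Rightarrow> ('v \<times> 'e list \<Rightarrow> 'k::field) set
    \<Rightarrow> ('v \<times> 'e list \<Rightarrow> 'k) set" where
  "dual_carrier s t C = {f. \<forall>p. p \<notin> paths_of s t C \<longrightarrow> f p = 0}"

definition conv :: "('e \<Rightarrow> 'v) \<Rightarrow> ('e \<Rightarrow> 'v) \<Rightarrow> ('v \<times> 'e list \<Rightarrow> 'k::field) set
    \<Rightarrow> ('v \<times> 'e list \<Rightarrow> 'k) \<Rightarrow> ('v \<times> 'e list \<Rightarrow> 'k) \<Rightarrow> ('v \<times> 'e list \<Rightarrow> 'k)" where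
  "conv s t C f g = (\<lambda>p. if p \<in> paths_of s t C then
      (\<Sum>i\<in>{0..length (snd p)}. f (fst p, take i (snd p)) *
           g (endv t (fst p) (take i (snd p)), drop i (snd p)))
     else 0)"

definition dual_ideal :: "('e \<Rightarrow> 'v) \<Rightarrow> ('e \<Rightarrow> 'v) \<Rightarrow> ('v \<times> 'e list \<Rightarrow> 'k::field) set
    \<Rightarrow> ('v \<times> 'e list \<Rightarrow> 'k) set \<Rightarrow> bool" where
  "dual_ideal s t C I \<longleftrightarrow>
     I \<subseteq> dual_carrier s t C \<and> (\<lambda>_. 0) \<in> I \<and>
     (\<forall>f\<in>I. \<forall>g\<in>I. (\<lambda>p. f p - g p) \<in> I) \<and>
     (\<forall>f\<in>I. \<forall>g\<in>dual_carrier s t C. conv s t C f g \<in> I \<and> conv s t C g f \<in> I)"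

text \<open>C is semiprime iff its dual algebra C* is semiprime:
  every two-sided ideal I of C* with I I = 0 is zero.\<close>
definition semiprime_monomial :: "('e \<Rightarrow> 'v) \<Rightarrow> ('e \<Rightarrow> 'v) \<Rightarrow> ('v \<times> 'e list \<Rightarrow> 'k::field) set \<Rightarrow> bool" where
  "semiprime_monomial s t C \<longleftrightarrow>
     (\<forall>I. dual_ideal s t C I \<and> (\<forall>f\<in>I. \<forall>g\<in>I. conv s t C f g = (\<lambda>_. 0)) \<longrightarrow> I \<subseteq> {\<lambda>_. 0})"

end

theory Submission
  imports Defs
begin

(* Since C is a subcoalgebra, comultiplication shows that every subpath of a path of C lies
   in C again.  If p cannot be extended to the right by any arrow inside C, then no path of
   C contains p immediately followed by an arrow.  Consequently the functionals on C supported
   on paths ending with p form a two-sided ideal of the dual algebra C* whose square is zero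
   (in a product f*g the factor g would have to contribute a nonempty tail after the p ending
   the factor f), and it is nonzero because it contains the dual basis vector of p.  Hence C*,
   and so C, is not semiprime.  The left-maximal case is symmetric, using paths starting with p. *)

lemma chain_append: "chain s t v (a @ b) = (chain s t v a \<and> chain s t (endv t v a) b)"
  by (induction a arbitrary: v) auto

lemma monomial_support:
  assumes "monomial s t C" and "x \<in> C" and "x p \<noteq> 0"
  shows "p \<in> paths_of s t C"
proof -
  have "x \<in> {x \<in> path_space s t. \<forall>p. x p \<noteq> 0 \<longrightarrow> p \<in> paths_of s t C}"
    using assms(1,2) unfolding monomial_def by blast
  then show ?thesis using assms(3) by blast
qed

text \<open>Splitting a path of C into two consecutive pieces gives two paths of C: the coefficient
  of \<open>u \<otimes> w\<close> in the comultiplication of \<open>uw\<close> is 1, and this comultiplication lies in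
  \<open>C \<otimes> C\<close>, so some simple tensor in C \<otimes> C is nonzero at \<open>(u, w)\<close>.\<close>

lemma paths_of_split:
  fixes C :: "('v \<times> 'e list \<Rightarrow> 'k::field) set"
  assumes sc: "subcoalgebra s t C" and mo: "monomial s t C"
    and q: "q \<in> paths_of s t C" and split: "snd q = u @ w"
  shows "(fst q, u) \<in> paths_of s t C" and "(endv t (fst q) u, w) \<in> paths_of s t C"
proof -
  let ?u = "(fst q, u)" and ?w = "(endv t (fst q) u, w)"
  have chains: "chain s t (fst q) u" "chain s t (endv t (fst q) u) w"
    using q split by (auto simp: paths_of_def is_path_def chain_append)
  have "comult s t (bvec q) \<in> tensor C C"
    using sc q by (simp add: subcoalgebra_def paths_of_def)
  then obtain n :: nat and xs ys where in_C: "\<forall>i<n. xs i \<in> C \<and> ys i \<in> C"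
    and comult_eq: "comult s t (bvec q) = (\<lambda>(a, b). \<Sum>i<n. xs i a * ys i b)"
    unfolding tensor_def by blast
  have "comult s t (bvec q :: _ \<Rightarrow> 'k) (?u, ?w) = 1"
    using chains split unfolding comult_def
    by (simp add: is_path_def composable_def pconcat_def bvec_def prod_eq_iff)
  then have "(\<Sum>i<n. xs i ?u * ys i ?w) \<noteq> 0"
    by (simp add: comult_eq)
  then obtain i where "i < n" "xs i ?u * ys i ?w \<noteq> 0"
    using sum.not_neutral_contains_not_neutral by blast
  then show "?u \<in> paths_of s t C" "?w \<in> paths_of s t C"
    using in_C monomial_support[OF mo] by (metis mult_eq_0_iff)+
qed

lemma paths_of_subpath:
  assumes sc: "subcoalgebra s t C" and mo: "monomial s t C"
    and q: "q \<in> paths_of s t C" and split: "snd q = a @ b @ c"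
  shows "(endv t (fst q) a, b) \<in> paths_of s t C"
  using paths_of_split(1)[OF sc mo paths_of_split(2)[OF sc mo q split]] by simp

lemma right_extension_in_paths_of:
  assumes sc: "subcoalgebra s t C" and mo: "monomial s t C"
    and p: "p \<in> paths_of s t C" and p_nontrivial: "snd p \<noteq> []"
    and q: "q \<in> paths_of s t C" and occurs: "snd q = a @ snd p @ \<beta> # c"
  shows "composable t p (arrow_path s \<beta>) \<and> pconcat p (arrow_path s \<beta>) \<in> paths_of s t C"
proof -
  let ?v = "endv t (fst q) a"
  have sub: "(?v, snd p @ [\<beta>]) \<in> paths_of s t C"
    using paths_of_subpath[OF sc mo q, of a "snd p @ [\<beta>]" c] occurs by simp
  then have chain: "chain s t ?v (snd p @ [\<beta>])" by (simp add: paths_of_def is_path_def)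
  have "?v = fst p"
    using chain p p_nontrivial by (cases "snd p") (auto simp: paths_of_def is_path_def)
  moreover have "s \<beta> = endv t ?v (snd p)" using chain by (simp add: chain_append)
  ultimately show ?thesis using sub by (simp add: composable_def arrow_path_def pconcat_def)
qed

lemma left_extension_in_paths_of:
  assumes sc: "subcoalgebra s t C" and mo: "monomial s t C"
    and p: "p \<in> paths_of s t C" and p_nontrivial: "snd p \<noteq> []"
    and q: "q \<in> paths_of s t C" and occurs: "snd q = a @ \<beta> # snd p @ c"
  shows "composable t (arrow_path s \<beta>) p \<and> pconcat (arrow_path s \<beta>) p \<in> paths_of s t C"
proof -
  let ?v = "endv t (fst q) a"
  have sub: "(?v, \<beta> # snd p) \<in> paths_of s t C"
    using paths_of_subpath[OF sc mo q, of a "\<beta> # snd p" c] occurs by simp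
  then have chain: "chain s t ?v (\<beta> # snd p)" by (simp add: paths_of_def is_path_def)
  have "t \<beta> = fst p"
    using chain p p_nontrivial by (cases "snd p") (auto simp: paths_of_def is_path_def)
  then show ?thesis using sub chain by (simp add: composable_def arrow_path_def pconcat_def)
qed

lemma conv_nonzero_split:
  assumes "conv s t C f g q \<noteq> (0::'k::field)"
  obtains u w where "q \<in> paths_of s t C" and "snd q = u @ w"
    and "f (fst q, u) \<noteq> 0" and "g (endv t (fst q) u, w) \<noteq> 0"
proof -
  have q: "q \<in> paths_of s t C" using assms by (auto simp: conv_def split: if_splits)
  then have "(\<Sum>i\<in>{0..length (snd q)}. f (fst q, take i (snd q)) *
               g (endv t (fst q) (take i (snd q)), drop i (snd q))) \<noteq> 0"
    using assms by (simp add: conv_def)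
  then obtain i where "f (fst q, take i (snd q)) *
      g (endv t (fst q) (take i (snd q)), drop i (snd q)) \<noteq> 0"
    using sum.not_neutral_contains_not_neutral by blast
  then show ?thesis using that[OF q, of "take i (snd q)" "drop i (snd q)"] by simp
qed

definition word_ideal :: "('e \<Rightarrow> 'v) \<Rightarrow> ('e \<Rightarrow> 'v) \<Rightarrow> ('v \<times> 'e list \<Rightarrow> 'k::field) set
    \<Rightarrow> ('e list \<Rightarrow> bool) \<Rightarrow> ('v \<times> 'e list \<Rightarrow> 'k) set" where
  "word_ideal s t C P = {f \<in> dual_carrier s t C. \<forall>q. f q \<noteq> 0 \<longrightarrow> P (snd q)}"

lemma word_ideal_dual_ideal:
  assumes absorb_left: "\<And>q u w. q \<in> paths_of s t C \<Longrightarrow> snd q = u @ w \<Longrightarrow> P u \<Longrightarrow> P (snd q)"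
    and absorb_right: "\<And>q u w. q \<in> paths_of s t C \<Longrightarrow> snd q = u @ w \<Longrightarrow> P w \<Longrightarrow> P (snd q)"
  shows "dual_ideal s t C (word_ideal s t C P)"
proof -
  have conv_in: "conv s t C f g \<in> word_ideal s t C P"
    if "f \<in> word_ideal s t C P \<or> g \<in> word_ideal s t C P" for f g
  proof -
    have "P (snd q)" if "conv s t C f g q \<noteq> 0" for q
    proof -
      obtain u w where q: "q \<in> paths_of s t C" and split: "snd q = u @ w"
        and "f (fst q, u) \<noteq> 0" and "g (endv t (fst q) u, w) \<noteq> 0"
        using conv_nonzero_split[OF \<open>conv s t C f g q \<noteq> 0\<close>] by blast
      then have "P u \<or> P w"
        using \<open>f \<in> word_ideal s t C P \<or> g \<in> word_ideal s t C P\<close>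
        unfolding word_ideal_def by auto
      then show ?thesis using absorb_left[OF q split] absorb_right[OF q split] by blast
    qed
    moreover have "conv s t C f g \<in> dual_carrier s t C"
      by (simp add: conv_def dual_carrier_def)
    ultimately show ?thesis unfolding word_ideal_def by blast
  qed
  have diff_in: "(\<lambda>p. f p - g p) \<in> word_ideal s t C P"
    if "f \<in> word_ideal s t C P" "g \<in> word_ideal s t C P" for f g
  proof -
    have "P (snd q)" if "f q - g q \<noteq> 0" for q
    proof -
      have "f q \<noteq> 0 \<or> g q \<noteq> 0" using that by auto
      then show ?thesis
        using \<open>f \<in> word_ideal s t C P\<close> \<open>g \<in> word_ideal s t C P\<close>
        unfolding word_ideal_def by blast
    qed
    then show ?thesis using that by (auto simp: word_ideal_def dual_carrier_def)
  qed
  show ?thesis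
    unfolding dual_ideal_def
  proof (intro conjI ballI)
    show "word_ideal s t C P \<subseteq> dual_carrier s t C" by (auto simp: word_ideal_def)
    show "(\<lambda>_. 0) \<in> word_ideal s t C P" by (simp add: word_ideal_def dual_carrier_def)
  qed (use conv_in diff_in in blast)+
qed

lemma word_ideal_square_zero:
  assumes disjoint: "\<And>q u w. q \<in> paths_of s t C \<Longrightarrow> snd q = u @ w \<Longrightarrow> P u \<Longrightarrow> P w \<Longrightarrow> False"
    and f: "f \<in> word_ideal s t C P" and g: "g \<in> word_ideal s t C P"
  shows "conv s t C f g = (\<lambda>_. 0)"
proof
  fix q
  show "conv s t C f g q = 0"
  proof (rule ccontr)
    assume "conv s t C f g q \<noteq> 0"
    then obtain u w where q: "q \<in> paths_of s t C" and split: "snd q = u @ w"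
      and "f (fst q, u) \<noteq> 0" and "g (endv t (fst q) u, w) \<noteq> 0"
      by (rule conv_nonzero_split)
    then have "P u" and "P w" using f g unfolding word_ideal_def by auto
    then show False using disjoint[OF q split] by blast
  qed
qed

lemma not_semiprime_by_word_property:
  fixes C :: "('v \<times> 'e list \<Rightarrow> 'k::field) set"
  assumes absorb_left: "\<And>q u w. q \<in> paths_of s t C \<Longrightarrow> snd q = u @ w \<Longrightarrow> P u \<Longrightarrow> P (snd q)"
    and absorb_right: "\<And>q u w. q \<in> paths_of s t C \<Longrightarrow> snd q = u @ w \<Longrightarrow> P w \<Longrightarrow> P (snd q)"
    and disjoint: "\<And>q u w. q \<in> paths_of s t C \<Longrightarrow> snd q = u @ w \<Longrightarrow> P u \<Longrightarrow> P w \<Longrightarrow> False"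
    and p: "p \<in> paths_of s t C" and "P (snd p)"
  shows "\<not> semiprime_monomial s t C"
proof
  assume semiprime: "semiprime_monomial s t C"
  have "dual_ideal s t C (word_ideal s t C P)"
    using absorb_left absorb_right by (rule word_ideal_dual_ideal)
  moreover have "\<forall>f \<in> word_ideal s t C P. \<forall>g \<in> word_ideal s t C P. conv s t C f g = (\<lambda>_. 0)"
    using disjoint word_ideal_square_zero by blast
  ultimately have "word_ideal s t C P \<subseteq> {\<lambda>_. 0 :: 'k}"
    using semiprime unfolding semiprime_monomial_def by blast
  moreover have "bvec p \<in> word_ideal s t C P"
    using p \<open>P (snd p)\<close> by (auto simp: word_ideal_def dual_carrier_def bvec_def)
  moreover have "bvec p p = (1::'k)" by (simp add: bvec_def)
  ultimately show False by (metis one_neq_zero singletonD subsetD)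
qed

lemma not_semiprime_right_maximal:
  assumes sc: "subcoalgebra s t C" and mo: "monomial s t C"
    and p: "p \<in> paths_of s t C" and p_nontrivial: "snd p \<noteq> []"
    and maximal: "\<forall>\<beta>. composable t p (arrow_path s \<beta>) \<longrightarrow> pconcat p (arrow_path s \<beta>) \<notin> paths_of s t C"
  shows "\<not> semiprime_monomial s t C"
proof -
  have no_occurrence: False if "q \<in> paths_of s t C" "snd q = a @ snd p @ \<beta> # c" for q a \<beta> c
    using right_extension_in_paths_of[OF sc mo p p_nontrivial that] maximal by blast
  show ?thesis
  proof (rule not_semiprime_by_word_property[where P = "\<lambda>w. \<exists>r. w = r @ snd p", OF _ _ _ p])
    fix q u w assume q: "q \<in> paths_of s t C" and split: "snd q = u @ w"
    show "\<exists>r. snd q = r @ snd p" if u_ends: "\<exists>r. u = r @ snd p"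
    proof (cases w)
      case (Cons \<beta> c)
      obtain r where "u = r @ snd p" using u_ends by blast
      then have "snd q = r @ snd p @ \<beta> # c" using split Cons by simp
      then show ?thesis using no_occurrence[OF q] by blast
    qed (use u_ends split in simp)
    show "\<exists>r. snd q = r @ snd p" if "\<exists>r. w = r @ snd p"
      using that split by (metis append.assoc)
    show False if both_end: "\<exists>r. u = r @ snd p" "\<exists>r. w = r @ snd p"
    proof -
      obtain r r' where "u = r @ snd p" "w = r' @ snd p" using both_end by blast
      moreover obtain \<beta> c where "r' @ snd p = \<beta> # c"
        using p_nontrivial by (cases "r' @ snd p") auto
      ultimately have "snd q = r @ snd p @ \<beta> # c" using split by simp
      then show False using no_occurrence[OF q] by blast
    qed
  qed simp
qed

lemma not_semiprime_left_maximal: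
  assumes sc: "subcoalgebra s t C" and mo: "monomial s t C"
    and p: "p \<in> paths_of s t C" and p_nontrivial: "snd p \<noteq> []"
    and maximal: "\<forall>\<beta>. composable t (arrow_path s \<beta>) p \<longrightarrow> pconcat (arrow_path s \<beta>) p \<notin> paths_of s t C"
  shows "\<not> semiprime_monomial s t C"
proof -
  have no_occurrence: False if "q \<in> paths_of s t C" "snd q = a @ \<beta> # snd p @ c" for q a \<beta> c
    using left_extension_in_paths_of[OF sc mo p p_nontrivial that] maximal by blast
  show ?thesis
  proof (rule not_semiprime_by_word_property[where P = "\<lambda>w. \<exists>r. w = snd p @ r", OF _ _ _ p])
    fix q u w assume q: "q \<in> paths_of s t C" and split: "snd q = u @ w"
    show "\<exists>r. snd q = snd p @ r" if "\<exists>r. u = snd p @ r"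
      using that split by (metis append.assoc)
    show "\<exists>r. snd q = snd p @ r" if w_starts: "\<exists>r. w = snd p @ r"
    proof (cases u rule: rev_cases)
      case (snoc a \<beta>)
      obtain r where "w = snd p @ r" using w_starts by blast
      then have "snd q = a @ \<beta> # snd p @ r" using split snoc by simp
      then show ?thesis using no_occurrence[OF q] by blast
    qed (use w_starts split in simp)
    show False if both_start: "\<exists>r. u = snd p @ r" "\<exists>r. w = snd p @ r"
    proof -
      obtain r r' where "u = snd p @ r" "w = snd p @ r'" using both_start by blast
      moreover obtain a \<beta> where "snd p @ r = a @ [\<beta>]"
        using p_nontrivial by (cases "snd p @ r" rule: rev_cases) auto
      ultimately have "snd q = a @ \<beta> # snd p @ r'" using split by simp
      then show False using no_occurrence[OF q] by blast
    qed
  qed simp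
qed

theorem mainTheorem20:
  fixes s t :: "'e \<Rightarrow> 'v" and C :: "('v \<times> 'e list \<Rightarrow> 'k::field) set"
  assumes "subcoalgebra s t C" and "monomial s t C" and "admissible s C"
  shows "((\<exists>p \<in> paths_of s t C. path_len p > 0 \<and>
            ((\<forall>\<beta>. composable t p (arrow_path s \<beta>) \<longrightarrow> pconcat p (arrow_path s \<beta>) \<notin> paths_of s t C) \<or>
             (\<forall>\<beta>. composable t (arrow_path s \<beta>) p \<longrightarrow> pconcat (arrow_path s \<beta>) p \<notin> paths_of s t C)))
          \<longrightarrow> \<not> semiprime_monomial s t C)
       \<and> ((\<exists>\<alpha>. (\<forall>\<beta>. composable t (arrow_path s \<beta>) (arrow_path s \<alpha>) \<longrightarrow>
                      pconcat (arrow_path s \<beta>) (arrow_path s \<alpha>) \<notin> paths_of s t C) \<or>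
                (\<forall>\<beta>. composable t (arrow_path s \<alpha>) (arrow_path s \<beta>) \<longrightarrow>
                      pconcat (arrow_path s \<alpha>) (arrow_path s \<beta>) \<notin> paths_of s t C))
          \<longrightarrow> \<not> semiprime_monomial s t C)"
proof -
  have maximal_path: "\<not> semiprime_monomial s t C"
    if "p \<in> paths_of s t C" "path_len p > 0"
      "(\<forall>\<beta>. composable t p (arrow_path s \<beta>) \<longrightarrow> pconcat p (arrow_path s \<beta>) \<notin> paths_of s t C) \<or>
       (\<forall>\<beta>. composable t (arrow_path s \<beta>) p \<longrightarrow> pconcat (arrow_path s \<beta>) p \<notin> paths_of s t C)"
    for p
  proof -
    have "snd p \<noteq> []" using \<open>path_len p > 0\<close> by (simp add: path_len_def)
    then show ?thesis
      using that(3) not_semiprime_right_maximal[OF assms(1,2) that(1)]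
        not_semiprime_left_maximal[OF assms(1,2) that(1)] by blast
  qed
  have arrows: "arrow_path s \<alpha> \<in> paths_of s t C" "path_len (arrow_path s \<alpha>) > 0" for \<alpha>
    using assms(3) by (simp_all add: admissible_def paths_of_def is_path_def arrow_path_def path_len_def)
  show ?thesis using maximal_path arrows by blast
qed

end
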